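(* Let $n\ge1$ and let $S\subseteq\mathbb{Z}_{2^n}$ with $|S|=2^{n-1}+1$. For every integer $a$ with $1\le a\le n$, $$|C(a+,a,a)|\ge\max\{|S_a|(|S_{a+}|-|L_a|+|S_a|),\;|S_{a+}|(2|S_a|-|L_a|),\;0\}.$$
   Context: Layers: for $1\le i\le n$, $L_i=\{x\in\mathbb{Z}_{2^n}: x\equiv 2^{i-1}\pmod{2^i}\}$, $L_{n+1}=\{0\}$. $S_i=S\cap L_i$ and $S_{i+}=S\cap(L_{i+1}\cup\dots\cup L_{n+1})$. $C(a+,a,a)$ is the set of ordered triples $(x,y,z)$ with $x+y=z$ in $\mathbb{Z}_{2^n}$, $x\in S_{a+}$, $y\in S_a$, $z\in S_a$. *)

theory Defs
  imports Main
begin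

text \<open>Z_{2^n} is represented by the naturals {0..<2^n} with addition modulo 2^n.\<close>

definition layer :: "nat \<Rightarrow> nat \<Rightarrow> nat set" where
  "layer n i = (if i = n + 1 then {0}
                else {x. x < 2^n \<and> x mod 2^i = 2^(i - 1)})"

definition S_layer :: "nat \<Rightarrow> nat set \<Rightarrow> nat \<Rightarrow> nat set" where
  "S_layer n S i = S \<inter> layer n i"

definition S_upper :: "nat \<Rightarrow> nat set \<Rightarrow> nat \<Rightarrow> nat set" where
  "S_upper n S i = S \<inter> (\<Union>j\<in>{i+1..n+1}. layer n j)"

definition C_triples :: "nat \<Rightarrow> nat set \<Rightarrow> nat \<Rightarrow> (nat \<times> nat \<times> nat) set" where
  "C_triples n S a = {(x, y, z). x \<in> S_upper n S a \<and> y \<in> S_layer n S a \<and> z \<in> S_layer n S a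
                                 \<and> (x + y) mod 2^n = z}"

end

theory Submission
  imports Defs "HOL-Number_Theory.Cong"
begin

text \<open>
  Every element of S_a+ is a multiple of 2^a, and L_a is the
  residue class of 2^(a-1) modulo 2^a. Translation by a fixed x in S_a+ therefore permutes L_a,
  so by inclusion-exclusion inside L_a at least 2|S_a| - |L_a| elements y of S_a satisfy
  x + y in S_a; summing over x gives the second bound. Symmetrically, translation by a fixed
  y in S_a maps the multiples of 2^a bijectively onto L_a, so at least |S_a+| + |S_a| - |L_a|
  elements x of S_a+ work; summing over y gives the first bound.
\<close>

definition residue_class :: "nat \<Rightarrow> nat \<Rightarrow> nat \<Rightarrow> nat set" where
  "residue_class m d r = {x. x < m \<and> x mod d = r}"

definition add_triples :: "nat \<Rightarrow> nat set \<Rightarrow> nat set \<Rightarrow> nat set \<Rightarrow> (nat \<times> nat \<times> nat) set" where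
  "add_triples m X Y Z = {(x, y, z). x \<in> X \<and> y \<in> Y \<and> z \<in> Z \<and> (x + y) mod m = z}"

lemma card_Int_vimage_ge:
  assumes bij: "bij_betw f A B" and "finite A" "P \<subseteq> A" "Q \<subseteq> B"
  shows "card P + card Q \<le> card B + card (P \<inter> f -` Q)"
proof -
  define R where "R = A \<inter> f -` Q"
  have "f ` R = Q" using bij \<open>Q \<subseteq> B\<close> unfolding R_def bij_betw_def by blast
  then have "bij_betw f R Q" using bij_betw_subset[OF bij] by (simp add: R_def)
  then have card_R: "card R = card Q" by (rule bij_betw_same_card)
  have fin: "finite P" "finite R" using \<open>finite A\<close> \<open>P \<subseteq> A\<close> finite_subset unfolding R_def by auto
  have "card (P \<union> R) \<le> card A" using \<open>finite A\<close> \<open>P \<subseteq> A\<close> by (intro card_mono) (auto simp: R_def)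
  moreover have "P \<inter> R = P \<inter> f -` Q" using \<open>P \<subseteq> A\<close> unfolding R_def by auto
  ultimately show ?thesis
    using card_Un_Int[OF fin] card_R bij_betw_same_card[OF bij] by simp
qed

lemma finite_residue_class [simp]: "finite (residue_class m d r)"
  unfolding residue_class_def by simp

lemma card_residue_class:
  fixes m d r :: nat
  assumes "d dvd m" "r < d"
  shows "card (residue_class m d r) = m div d"
proof -
  have "residue_class m d r = (\<lambda>q. d * q + r) ` {..<m div d}"
  proof (intro equalityI subsetI)
    fix x assume "x \<in> residue_class m d r"
    then have "x < m" "x = d * (x div d) + r" unfolding residue_class_def by auto
    moreover have "x div d < m div d"
      using \<open>x < m\<close> assms by (metis div_less_iff_less_mult dvd_div_mult_self gr_zeroI not_less_zero)
    ultimately show "x \<in> (\<lambda>q. d * q + r) ` {..<m div d}" by blast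
  next
    fix x assume "x \<in> (\<lambda>q. d * q + r) ` {..<m div d}"
    then obtain q where q: "q < m div d" "x = d * q + r" by blast
    have "d * q + r < d * Suc q" using \<open>r < d\<close> by simp
    also have "\<dots> \<le> d * (m div d)" using q(1) by (intro mult_le_mono2) simp
    also have "\<dots> = m" using \<open>d dvd m\<close> by simp
    finally show "x \<in> residue_class m d r" using q \<open>r < d\<close> by (simp add: residue_class_def)
  qed
  moreover have "inj_on (\<lambda>q. d * q + r) {..<m div d}"
    using \<open>r < d\<close> by (intro inj_onI) simp
  ultimately show ?thesis by (simp add: card_image)
qed

lemma bij_betw_add_mod_residue_class:
  fixes m d s x :: nat
  assumes "d dvd m" "s < d"
  shows "bij_betw (\<lambda>y. (x + y) mod m) (residue_class m d s) (residue_class m d ((x mod d + s) mod d))"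
proof -
  let ?t = "\<lambda>y. (x + y) mod m"
  have inj: "inj_on ?t (residue_class m d s)"
  proof (intro inj_onI)
    fix y y' assume "y \<in> residue_class m d s" "y' \<in> residue_class m d s" "?t y = ?t y'"
    then show "y = y'"
      using cong_add_lcancel_nat[of x y y' m] by (simp add: residue_class_def cong_def)
  qed
  have "?t ` residue_class m d s \<subseteq> residue_class m d ((x mod d + s) mod d)"
    using \<open>d dvd m\<close> by (auto simp: residue_class_def mod_mod_cancel mod_add_eq)
  moreover have "card (?t ` residue_class m d s) = card (residue_class m d ((x mod d + s) mod d))"
    using assms by (simp add: card_image[OF inj] card_residue_class)
  ultimately show ?thesis
    using inj card_subset_eq by (metis bij_betw_def finite_residue_class)
qed

lemma card_add_triples_eq_sum:
  assumes "finite X" "finite Y"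
  shows "card (add_triples m X Y Z) = (\<Sum>x\<in>X. card (Y \<inter> (\<lambda>y. (x + y) mod m) -` Z))"
proof -
  have "add_triples m X Y Z
      = (\<lambda>(x, y). (x, y, (x + y) mod m)) ` (SIGMA x:X. Y \<inter> (\<lambda>y. (x + y) mod m) -` Z)"
    unfolding add_triples_def by auto
  moreover have "inj_on (\<lambda>(x, y). (x, y, (x + y) mod m)) (SIGMA x:X. Y \<inter> (\<lambda>y. (x + y) mod m) -` Z)"
    by (intro inj_onI) auto
  ultimately show ?thesis using assms by (simp add: card_image)
qed

lemma card_add_triples_commute: "card (add_triples m X Y Z) = card (add_triples m Y X Z)"
proof -
  have "add_triples m Y X Z = (\<lambda>(x, y, z). (y, x, z)) ` add_triples m X Y Z"
    unfolding add_triples_def by (auto simp: add.commute image_iff)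
  moreover have "inj_on (\<lambda>(x, y, z). (y, x, z)) (add_triples m X Y Z)"
    by (intro inj_onI) auto
  ultimately show ?thesis by (simp add: card_image)
qed

lemma card_add_triples_residue_class_ge:
  fixes m d r s :: nat
  assumes "d dvd m" "s < d"
    and X: "X \<subseteq> residue_class m d r"
    and Y: "Y \<subseteq> residue_class m d s"
    and Z: "Z \<subseteq> residue_class m d ((r + s) mod d)"
  shows "card X * (card Y + card Z) \<le> card (add_triples m X Y Z) + card X * (m div d)"
proof -
  have fin: "finite X" "finite Y" using X Y by (auto intro: finite_subset)
  have fiber: "card Y + card Z \<le> m div d + card (Y \<inter> (\<lambda>y. (x + y) mod m) -` Z)" if "x \<in> X" for x
  proof -
    have "x mod d = r" using X that by (auto simp: residue_class_def)
    then have "bij_betw (\<lambda>y. (x + y) mod m) (residue_class m d s) (residue_class m d ((r + s) mod d))"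
      using bij_betw_add_mod_residue_class[OF assms(1,2), of x] by simp
    then have "card Y + card Z
        \<le> card (residue_class m d ((r + s) mod d)) + card (Y \<inter> (\<lambda>y. (x + y) mod m) -` Z)"
      using Y Z by (rule card_Int_vimage_ge[OF _ finite_residue_class])
    moreover have "card (residue_class m d ((r + s) mod d)) = m div d"
      using assms(1,2) by (simp add: card_residue_class)
    ultimately show ?thesis by simp
  qed
  have "card X * (card Y + card Z) = (\<Sum>x\<in>X. card Y + card Z)" by simp
  also have "\<dots> \<le> (\<Sum>x\<in>X. m div d + card (Y \<inter> (\<lambda>y. (x + y) mod m) -` Z))"
    using fiber by (rule sum_mono)
  also have "\<dots> = card (add_triples m X Y Z) + card X * (m div d)"
    using fin by (simp add: sum.distrib card_add_triples_eq_sum)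
  finally show ?thesis .
qed

lemma layer_eq_residue_class:
  assumes "1 \<le> i" "i \<le> n"
  shows "layer n i = residue_class (2^n) (2^i) (2^(i - 1))"
  using assms by (simp add: layer_def residue_class_def)

lemma S_upper_subset_residue_class:
  assumes "a \<le> n"
  shows "S_upper n S a \<subseteq> residue_class (2^n) (2^a) 0"
proof
  fix x assume "x \<in> S_upper n S a"
  then obtain j where j: "a < j" "j \<le> n + 1" "x \<in> layer n j"
    unfolding S_upper_def by (auto simp: Suc_le_eq)
  show "x \<in> residue_class (2^n) (2^a) 0"
  proof (cases "j = n + 1")
    case True
    then show ?thesis using j by (simp add: layer_def residue_class_def)
  next
    case False
    then have x: "x < 2^n" "x mod 2^j = 2^(j - 1)" using j by (auto simp: layer_def)
    have "(2::nat)^a dvd 2^j" "(2::nat)^a dvd 2^(j - 1)" using j by (auto intro: le_imp_power_dvd)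
    then have "x mod 2^a = 0"
      using x(2) by (metis mod_mod_cancel dvd_imp_mod_0)
    then show ?thesis using x by (simp add: residue_class_def)
  qed
qed

theorem claim4p3:
  fixes n a :: nat and S :: "nat set"
  assumes "n \<ge> 1"
    and "S \<subseteq> {..<2^n}"
    and "card S = 2^(n-1) + 1"
    and "1 \<le> a" and "a \<le> n"
  shows "int (card (C_triples n S a)) \<ge>
    max (int (card (S_layer n S a)) * (int (card (S_upper n S a)) - int (card (layer n a)) + int (card (S_layer n S a))))
        (max (int (card (S_upper n S a)) * (2 * int (card (S_layer n S a)) - int (card (layer n a)))) 0)"
proof -
  let ?m = "2^n :: nat" and ?d = "2^a :: nat" and ?h = "2^(a - 1) :: nat"
  let ?L = "layer n a" and ?Sa = "S_layer n S a" and ?Su = "S_upper n S a" and ?C = "C_triples n S a"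
  have dvd: "?d dvd ?m" and h: "?h < ?d" using assms(4,5) by (auto intro: le_imp_power_dvd)
  have L: "?L = residue_class ?m ?d ?h" using assms(4,5) by (rule layer_eq_residue_class)
  have Sa: "?Sa \<subseteq> residue_class ?m ?d ?h" using L by (auto simp: S_layer_def)
  have Su: "?Su \<subseteq> residue_class ?m ?d 0" using assms(5) by (rule S_upper_subset_residue_class)
  have card_L: "card ?L = ?m div ?d" using L dvd h by (simp add: card_residue_class)
  have C: "?C = add_triples ?m ?Su ?Sa ?Sa" unfolding C_triples_def add_triples_def by simp
  have "card ?Su * (card ?Sa + card ?Sa) \<le> card ?C + card ?Su * card ?L"
    using card_add_triples_residue_class_ge[OF dvd h Su Sa] Sa h C card_L by simp
  then have "int (card ?Su) * (2 * int (card ?Sa) - int (card ?L)) \<le> int (card ?C)"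
    by (drule_tac zle_int[THEN iffD2]) (simp add: algebra_simps)
  moreover have "card ?Sa * (card ?Su + card ?Sa) \<le> card ?C + card ?Sa * card ?L"
    using card_add_triples_residue_class_ge[OF dvd _ Sa Su] Sa h C card_L
    by (simp add: card_add_triples_commute)
  then have "int (card ?Sa) * (int (card ?Su) - int (card ?L) + int (card ?Sa)) \<le> int (card ?C)"
    by (drule_tac zle_int[THEN iffD2]) (simp add: algebra_simps)
  ultimately show ?thesis by simp
qed

end
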